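(* Let $(\Omega(\mathcal{A}),d)$ be a differential calculus on a complex algebra $\mathcal{A}$ with $\mathcal{E}=\Omega^1(\mathcal{A})$ a finitely generated projective right $\mathcal{A}$-module satisfying: (1) $\mathcal{E}=\mathcal{Z}(\mathcal{E})\otimes_{\mathcal{Z}(\mathcal{A})}\mathcal{A}$; (2) $\mathcal{E}\otimes_{\mathcal{A}}\mathcal{E}=\ker(\wedge)\oplus\mathcal{F}$ with $\mathcal{F}$ a right submodule and $Q=\wedge|_{\mathcal{F}}:\mathcal{F}\to\Omega^2(\mathcal{A})$ a right $\mathcal{A}$-linear isomorphism; (3) $\sigma(\omega\otimes_{\mathcal{A}}\eta)=\eta\otimes_{\mathcal{A}}\omega$ for all $\omega,\eta\in\mathcal{Z}(\mathcal{E})$. Let $\nabla_0$ be as in the context. Then: (a) if $\omega\in\mathcal{Z}(\mathcal{E})$ then $d\omega\in\mathcal{Z}(\Omega^2(\mathcal{A}))$; (b) if $\omega\in\mathcal{Z}(\mathcal{E})$ then $(1-\sigma)\nabla_0(\omega)\in\mathcal{Z}(\mathcal{E}\otimes_{\mathcal{A}}\mathcal{E})$.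
   Context: A differential calculus: $\Omega(\mathcal{A})=\oplus_{j\ge0}\Omega^j(\mathcal{A})$, $\Omega^0=\mathcal{A}$, bimodules $\Omega^j$, an $\mathcal{A}$-bimodule product $\wedge$ adding degrees, $d$ of degree one with $d^2=0$ and $d(\omega\wedge\eta)=d\omega\wedge\eta+(-1)^{\deg\omega}\omega\wedge d\eta$, $\Omega^j$ right-spanned by $da_0\wedge\cdots\wedge da_{j-1}$. $\wedge:\mathcal{E}\otimes_{\mathcal{A}}\mathcal{E}\to\Omega^2(\mathcal{A})$ is the induced product; $P_{\rm sym}$ the idempotent with image $\ker\wedge$ and kernel $\mathcal{F}$; $\sigma=2P_{\rm sym}-1$. $\mathcal{Z}(\mathcal{M})=\{m:am=ma\ \forall a\in\mathcal{A}\}$ for a bimodule $\mathcal{M}$. A connection is a $\mathbb{C}$-linear $\nabla:\mathcal{E}\to\mathcal{E}\otimes_{\mathcal{A}}\mathcal{E}$ with $\nabla(\omega a)=\nabla(\omega)a+\omega\otimes_{\mathcal{A}}da$. With an idempotent $p\in M_n(\mathcal{A})$, $p(\mathcal{A}^n)=\mathcal{E}$, $\Phi_j=p(e_j)$, the Grassmann connection is $\nabla^{Gr}(\sum_j\Phi_ja_j)=\sum_j\Phi_j\otimes_{\mathcal{A}}da_j$, and $\nabla_0:=\nabla^{Gr}-Q^{-1}\circ(\wedge\circ\nabla^{Gr}+d)$, a connection with $\wedge\circ\nabla_0+d=0$. *)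

theory Defs
  imports Complex_Main
begin

text \<open>
  The whole differential calculus
  Omega(A) = (+)_j Omega^j is one unital ring of type 'w; the grading is given by
  the subgroups Om j; the product (wedge) is the ring multiplication; A = Om 0
  (a complex algebra via the central ring homomorphism sc : complex => 'w).
  The bimodule structures of the Om j are given by multiplication with A = Om 0.
  E = Om 1.  The tensor product E (x)_A E is an abstract abelian group 't with
  an A-bimodule structure (lmul, rmul) and the canonical map tens.
\<close>

definition subgroup_set :: "'v::ab_group_add set \<Rightarrow> bool" where
  "subgroup_set S \<longleftrightarrow> 0 \<in> S \<and> (\<forall>x\<in>S. \<forall>y\<in>S. x + y \<in> S \<and> - x \<in> S)"

definition diff_calculus :: "(nat \<Rightarrow> 'w::ring_1 set) \<Rightarrow> ('w \<Rightarrow> 'w) \<Rightarrow> (complex \<Rightarrow> 'w) \<Rightarrow> bool" where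
  "diff_calculus Om d sc \<longleftrightarrow>
     (\<forall>j. subgroup_set (Om j)) \<and>
     (\<forall>w. \<exists>N f. (\<forall>j. f j \<in> Om j) \<and> w = (\<Sum>j<N. f j)) \<and>
     (\<forall>N f. (\<forall>j. f j \<in> Om j) \<and> (\<Sum>j<N. f j) = 0 \<longrightarrow> (\<forall>j<N. f j = 0)) \<and>
     1 \<in> Om 0 \<and>
     (\<forall>i j. \<forall>x\<in>Om i. \<forall>y\<in>Om j. x * y \<in> Om (i + j)) \<and>
     sc 1 = 1 \<and>
     (\<forall>c c'. sc (c + c') = sc c + sc c' \<and> sc (c * c') = sc c * sc c') \<and>
     (\<forall>c. sc c \<in> Om 0 \<and> (\<forall>w. sc c * w = w * sc c)) \<and>
     (\<forall>x y. d (x + y) = d x + d y) \<and>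
     (\<forall>c w. d (sc c * w) = sc c * d w) \<and>
     (\<forall>j. \<forall>x\<in>Om j. d x \<in> Om (Suc j)) \<and>
     (\<forall>x. d (d x) = 0) \<and>
     (\<forall>i. \<forall>x\<in>Om i. \<forall>y. d (x * y) = d x * y + (-1) ^ i * x * d y) \<and>
     (\<forall>j. \<forall>w\<in>Om j. \<exists>(m::nat) a b. (\<forall>k<m. b k \<in> Om 0 \<and> (\<forall>i<j. a k i \<in> Om 0)) \<and>
          w = (\<Sum>k<m. prod_list (map (\<lambda>i. d (a k i)) [0..<j]) * b k))"

definition centre :: "'w set \<Rightarrow> ('w \<Rightarrow> 'v \<Rightarrow> 'v) \<Rightarrow> ('v \<Rightarrow> 'w \<Rightarrow> 'v) \<Rightarrow> 'v set \<Rightarrow> 'v set" where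
  "centre A lm rm M = {m \<in> M. \<forall>a\<in>A. lm a m = rm m a}"

text \<open>Since all modules occurring here are
  complex vector spaces (C is central in R), and C is a cogenerator for complex
  vector spaces, this characterises the tensor product up to isomorphism.\<close>
definition is_tensor_product ::
  "'r set \<Rightarrow> 'm::ab_group_add set \<Rightarrow> 'n::ab_group_add set \<Rightarrow> ('m \<Rightarrow> 'r \<Rightarrow> 'm) \<Rightarrow> ('r \<Rightarrow> 'n \<Rightarrow> 'n)
    \<Rightarrow> 't::ab_group_add set \<Rightarrow> ('m \<Rightarrow> 'n \<Rightarrow> 't) \<Rightarrow> bool" where
  "is_tensor_product R M N rm lm T \<tau> \<longleftrightarrow>
     (\<forall>x\<in>M. \<forall>y\<in>N. \<tau> x y \<in> T) \<and>
     (\<forall>x\<in>M. \<forall>x'\<in>M. \<forall>y\<in>N. \<tau> (x + x') y = \<tau> x y + \<tau> x' y) \<and>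
     (\<forall>x\<in>M. \<forall>y\<in>N. \<forall>y'\<in>N. \<tau> x (y + y') = \<tau> x y + \<tau> x y') \<and>
     (\<forall>x\<in>M. \<forall>r\<in>R. \<forall>y\<in>N. \<tau> (rm x r) y = \<tau> x (lm r y)) \<and>
     (\<forall>t\<in>T. \<exists>(k::nat) x y. (\<forall>i<k. x i \<in> M \<and> y i \<in> N) \<and> t = (\<Sum>i<k. \<tau> (x i) (y i))) \<and>
     (\<forall>\<beta> :: 'm \<Rightarrow> 'n \<Rightarrow> complex.
        (\<forall>x\<in>M. \<forall>x'\<in>M. \<forall>y\<in>N. \<beta> (x + x') y = \<beta> x y + \<beta> x' y) \<and>
        (\<forall>x\<in>M. \<forall>y\<in>N. \<forall>y'\<in>N. \<beta> x (y + y') = \<beta> x y + \<beta> x y') \<and>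
        (\<forall>x\<in>M. \<forall>r\<in>R. \<forall>y\<in>N. \<beta> (rm x r) y = \<beta> x (lm r y)) \<longrightarrow>
        (\<exists>\<phi>. (\<forall>s\<in>T. \<forall>t\<in>T. \<phi> (s + t) = \<phi> s + \<phi> t) \<and>
             (\<forall>x\<in>M. \<forall>y\<in>N. \<phi> (\<tau> x y) = \<beta> x y)))"

definition tensor_bimodule ::
  "'w::ring_1 set \<Rightarrow> 'w set \<Rightarrow> ('w \<Rightarrow> 't::ab_group_add \<Rightarrow> 't) \<Rightarrow> ('t \<Rightarrow> 'w \<Rightarrow> 't) \<Rightarrow> ('w \<Rightarrow> 'w \<Rightarrow> 't) \<Rightarrow> bool" where
  "tensor_bimodule A E lmul rmul tens \<longleftrightarrow>
     (\<forall>a\<in>A. \<forall>s t. lmul a (s + t) = lmul a s + lmul a t) \<and>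
     (\<forall>a\<in>A. \<forall>b\<in>A. \<forall>t. lmul (a + b) t = lmul a t + lmul b t) \<and>
     (\<forall>a\<in>A. \<forall>b\<in>A. \<forall>t. lmul (a * b) t = lmul a (lmul b t)) \<and>
     (\<forall>t. lmul 1 t = t) \<and>
     (\<forall>a\<in>A. \<forall>s t. rmul (s + t) a = rmul s a + rmul t a) \<and>
     (\<forall>a\<in>A. \<forall>b\<in>A. \<forall>t. rmul t (a + b) = rmul t a + rmul t b) \<and>
     (\<forall>a\<in>A. \<forall>b\<in>A. \<forall>t. rmul t (a * b) = rmul (rmul t a) b) \<and>
     (\<forall>t. rmul t 1 = t) \<and>
     (\<forall>a\<in>A. \<forall>b\<in>A. \<forall>t. lmul a (rmul t b) = rmul (lmul a t) b) \<and>
     (\<forall>a\<in>A. \<forall>x\<in>E. \<forall>y\<in>E. lmul a (tens x y) = tens (a * x) y) \<and>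
     (\<forall>a\<in>A. \<forall>x\<in>E. \<forall>y\<in>E. rmul (tens x y) a = tens x (y * a))"

text \<open>p(A^n) for an n x n matrix p with entries in A: columns vectors indexed by
  nat, with entries in A, zero beyond n, and fixed by p.\<close>
definition proj_image :: "'w::ring_1 set \<Rightarrow> nat \<Rightarrow> (nat \<Rightarrow> nat \<Rightarrow> 'w) \<Rightarrow> (nat \<Rightarrow> 'w) set" where
  "proj_image A n p = {v. (\<forall>i. v i \<in> A) \<and> (\<forall>i\<ge>n. v i = 0) \<and>
                          (\<forall>i<n. v i = (\<Sum>k<n. p i k * v k))}"

text \<open>Phi_j = p(e_j), transported to E by the identification iota : p(A^n) -> E.\<close>
definition Phi :: "nat \<Rightarrow> (nat \<Rightarrow> nat \<Rightarrow> 'w::ring_1) \<Rightarrow> ((nat \<Rightarrow> 'w) \<Rightarrow> 'w) \<Rightarrow> nat \<Rightarrow> 'w" where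
  "Phi n p iota j = iota (\<lambda>i. if i < n then p i j else 0)"

definition grassmann ::
  "'w::ring_1 set \<Rightarrow> ('w \<Rightarrow> 'w) \<Rightarrow> ('w \<Rightarrow> 'w \<Rightarrow> 't::ab_group_add) \<Rightarrow> nat \<Rightarrow> (nat \<Rightarrow> nat \<Rightarrow> 'w)
     \<Rightarrow> ((nat \<Rightarrow> 'w) \<Rightarrow> 'w) \<Rightarrow> 'w \<Rightarrow> 't" where
  "grassmann A d tens n p iota \<omega> =
     (\<Sum>j<n. tens (Phi n p iota j) (d (the_inv_into (proj_image A n p) iota \<omega> j)))"

definition nabla0 ::
  "'w::ring_1 set \<Rightarrow> ('w \<Rightarrow> 'w) \<Rightarrow> ('w \<Rightarrow> 'w \<Rightarrow> 't::ab_group_add) \<Rightarrow> ('t \<Rightarrow> 'w) \<Rightarrow> 't set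
     \<Rightarrow> nat \<Rightarrow> (nat \<Rightarrow> nat \<Rightarrow> 'w) \<Rightarrow> ((nat \<Rightarrow> 'w) \<Rightarrow> 'w) \<Rightarrow> 'w \<Rightarrow> 't" where
  "nabla0 A d tens wedgeT F n p iota \<omega> =
     grassmann A d tens n p iota \<omega>
     - the_inv_into F wedgeT (wedgeT (grassmann A d tens n p iota \<omega>) + d \<omega>)"

definition sigma :: "('t::ab_group_add \<Rightarrow> 't) \<Rightarrow> 't \<Rightarrow> 't" where
  "sigma Psym t = Psym t + Psym t - t"

end

theory Submission
  imports Defs
begin

(* Since wedge o sigma = - wedge, condition (3) makes central 1-forms anticommute, and by
   condition (1) a central 1-form then anticommutes with all of E, in particular with every
   d a.  The graded Leibniz rule turns a omega = omega a into a d omega = d omega a.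
   Conditions (1) and (3) also make sigma a bimodule map, and 1 - sigma = 2 (1 - P_sym),
   where (1 - P_sym) t is the unique element of F with the same wedge as t.  Hence
   (1 - sigma) u is central as soon as wedge u is central; this applies to u = nabla_0 omega,
   whose wedge is - d omega. *)

lemma subgroup_set_UNIV: "subgroup_set UNIV"
  by (simp add: subgroup_set_def)

lemma tensor_product_induct [consumes 3, case_names zero add tensor]:
  assumes tp: "is_tensor_product R M N rm lm T \<tau>" and T: "subgroup_set T" and t: "t \<in> T"
    and zero: "P 0"
    and add: "\<And>s t. s \<in> T \<Longrightarrow> t \<in> T \<Longrightarrow> P s \<Longrightarrow> P t \<Longrightarrow> P (s + t)"
    and tensor: "\<And>x y. x \<in> M \<Longrightarrow> y \<in> N \<Longrightarrow> P (\<tau> x y)"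
  shows "P t"
proof -
  obtain k :: nat and x y where xy: "\<forall>i<k. x i \<in> M \<and> y i \<in> N"
    and t_eq: "t = (\<Sum>i<k. \<tau> (x i) (y i))"
    using tp t unfolding is_tensor_product_def by meson
  have "(\<Sum>i<j. \<tau> (x i) (y i)) \<in> T \<and> P (\<Sum>i<j. \<tau> (x i) (y i))" if "j \<le> k" for j
    using that
  proof (induction j)
    case 0
    then show ?case using T zero by (simp add: subgroup_set_def)
  next
    case (Suc j)
    then have "x j \<in> M" "y j \<in> N" using xy by auto
    then have "\<tau> (x j) (y j) \<in> T" using tp unfolding is_tensor_product_def by blast
    then show ?case using Suc T add tensor \<open>x j \<in> M\<close> \<open>y j \<in> N\<close>
      by (simp add: subgroup_set_def)
  qed
  then show ?thesis using t_eq by blast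
qed

lemma tensor_zero_left:
  assumes "is_tensor_product R M N rm lm T \<tau>" "0 \<in> M" "y \<in> N"
  shows "\<tau> 0 y = 0"
proof -
  have "\<tau> (0 + 0) y = \<tau> 0 y + \<tau> 0 y" using assms unfolding is_tensor_product_def by blast
  then show ?thesis by simp
qed

lemma tensor_zero_right:
  assumes "is_tensor_product R M N rm lm T \<tau>" "x \<in> M" "0 \<in> N"
  shows "\<tau> x 0 = 0"
proof -
  have "\<tau> x (0 + 0) = \<tau> x 0 + \<tau> x 0" using assms unfolding is_tensor_product_def by blast
  then show ?thesis by simp
qed

lemma wedge_sigma:
  assumes "additive W" and "\<And>t. W (P t) = 0"
  shows "W (sigma P t) = - W t"
  using assms by (simp add: sigma_def additive.diff additive.add)

lemma
  assumes "diff_calculus Om d sc"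
  shows diff_calculus_subgroup: "subgroup_set (Om j)"
    and diff_calculus_mult_closed: "x \<in> Om i \<Longrightarrow> y \<in> Om j \<Longrightarrow> x * y \<in> Om (i + j)"
    and diff_calculus_d_closed: "x \<in> Om j \<Longrightarrow> d x \<in> Om (Suc j)"
    and diff_calculus_leibniz: "x \<in> Om i \<Longrightarrow> d (x * y) = d x * y + (-1) ^ i * x * d y"
  using assms by (simp_all add: diff_calculus_def)

lemma diff_calculus_d_central:
  assumes dc: "diff_calculus Om d sc" and \<omega>: "\<omega> \<in> Om 1"
    and comm: "\<And>a. a \<in> Om 0 \<Longrightarrow> a * \<omega> = \<omega> * a"
    and anticomm: "\<And>a. a \<in> Om 0 \<Longrightarrow> \<omega> * d a + d a * \<omega> = 0"
  shows "d \<omega> \<in> centre (Om 0) (*) (*) (Om 2)"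
proof -
  have "a * d \<omega> = d \<omega> * a" if a: "a \<in> Om 0" for a
  proof -
    have "a * d \<omega> = d (a * \<omega>) - d a * \<omega>"
      using diff_calculus_leibniz[OF dc a] by simp
    also have "\<dots> = d (\<omega> * a) - d a * \<omega>" using comm[OF a] by simp
    also have "\<dots> = d \<omega> * a - (\<omega> * d a + d a * \<omega>)"
      using diff_calculus_leibniz[OF dc \<omega>] by (simp add: algebra_simps)
    also have "\<dots> = d \<omega> * a" using anticomm[OF a] by simp
    finally show ?thesis .
  qed
  moreover have "d \<omega> \<in> Om 2" using diff_calculus_d_closed[OF dc \<omega>] by (simp add: numeral_2_eq_2)
  ultimately show ?thesis unfolding centre_def by blast
qed

locale wedge_calculus =
  fixes Om :: "nat \<Rightarrow> 'w::ring_1 set" and d :: "'w \<Rightarrow> 'w" and sc :: "complex \<Rightarrow> 'w"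
    and lmul :: "'w \<Rightarrow> 't::ab_group_add \<Rightarrow> 't" and rmul :: "'t \<Rightarrow> 'w \<Rightarrow> 't"
    and tens :: "'w \<Rightarrow> 'w \<Rightarrow> 't" and wedgeT :: "'t \<Rightarrow> 'w"
  assumes calculus: "diff_calculus Om d sc"
    and bimodule: "tensor_bimodule (Om 0) (Om 1) lmul rmul tens"
    and tensor_product: "is_tensor_product (Om 0) (Om 1) (Om 1) (*) (*) UNIV tens"
    and wedge_add: "wedgeT (s + t) = wedgeT s + wedgeT t"
    and wedge_tens: "x \<in> Om 1 \<Longrightarrow> y \<in> Om 1 \<Longrightarrow> wedgeT (tens x y) = x * y"
begin

sublocale wedge: additive wedgeT
  by unfold_locales (rule wedge_add)

lemma
  assumes "a \<in> Om 0"
  shows lmul_additive: "additive (lmul a)"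
    and rmul_additive: "additive (\<lambda>t. rmul t a)"
  using bimodule assms by (simp_all add: tensor_bimodule_def additive_def)

lemma
  assumes "a \<in> Om 0" and "b \<in> Om 0"
  shows lmul_rmul: "lmul a (rmul t b) = rmul (lmul a t) b"
    and rmul_rmul: "rmul t (a * b) = rmul (rmul t a) b"
  using bimodule assms by (simp_all add: tensor_bimodule_def)

lemma
  assumes "a \<in> Om 0" and "x \<in> Om 1" and "y \<in> Om 1"
  shows lmul_tens: "lmul a (tens x y) = tens (a * x) y"
    and rmul_tens: "rmul (tens x y) a = tens x (y * a)"
    and tens_balanced: "tens (x * a) y = tens x (a * y)"
  using bimodule tensor_product assms
  by (simp_all add: tensor_bimodule_def is_tensor_product_def)

lemma
  assumes "x \<in> Om 1" and "x' \<in> Om 1" and "y \<in> Om 1"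
  shows tens_add_left: "tens (x + x') y = tens x y + tens x' y"
    and tens_add_right: "tens y (x + x') = tens y x + tens y x'"
  using tensor_product assms by (simp_all add: is_tensor_product_def)

lemma Om_subgroup: "subgroup_set (Om j)"
  using diff_calculus_subgroup[OF calculus] .

lemma
  shows zero_Om: "0 \<in> Om j"
    and add_Om: "x \<in> Om j \<Longrightarrow> y \<in> Om j \<Longrightarrow> x + y \<in> Om j"
    and uminus_Om: "x \<in> Om j \<Longrightarrow> - x \<in> Om j"
  using Om_subgroup by (simp_all add: subgroup_set_def)

lemma mult_Om: "x \<in> Om i \<Longrightarrow> y \<in> Om j \<Longrightarrow> x * y \<in> Om (i + j)"
  using diff_calculus_mult_closed[OF calculus] .

lemma
  shows tens_zero_left: "y \<in> Om 1 \<Longrightarrow> tens 0 y = 0"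
    and tens_zero_right: "x \<in> Om 1 \<Longrightarrow> tens x 0 = 0"
  using tensor_zero_left tensor_zero_right tensor_product zero_Om by blast+

lemma tens_induct [case_names zero add tens]:
  assumes "P 0" and "\<And>s t. P s \<Longrightarrow> P t \<Longrightarrow> P (s + t)"
    and "\<And>x y. x \<in> Om 1 \<Longrightarrow> y \<in> Om 1 \<Longrightarrow> P (tens x y)"
  shows "P t"
  using tensor_product subgroup_set_UNIV UNIV_I assms by (rule tensor_product_induct)

lemma wedge_in_Om2: "wedgeT t \<in> Om 2"
proof (induction t rule: tens_induct)
  case (tens x y)
  then show ?case using mult_Om[of x 1 y 1] wedge_tens by (simp add: numeral_2_eq_2)
qed (simp_all add: wedge.zero wedge.add zero_Om add_Om)

lemma wedge_lmul:
  assumes a: "a \<in> Om 0"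
  shows "wedgeT (lmul a t) = a * wedgeT t"
proof (induction t rule: tens_induct)
  case zero
  then show ?case using additive.zero[OF lmul_additive[OF a]] by (simp add: wedge.zero)
next
  case (add s t)
  then show ?case using additive.add[OF lmul_additive[OF a]] by (simp add: wedge.add distrib_left)
next
  case (tens x y)
  then show ?case using a mult_Om[of a 0 x 1] by (simp add: lmul_tens wedge_tens mult.assoc)
qed

lemma wedge_rmul:
  assumes a: "a \<in> Om 0"
  shows "wedgeT (rmul t a) = wedgeT t * a"
proof (induction t rule: tens_induct)
  case zero
  then show ?case using additive.zero[OF rmul_additive[OF a]] by (simp add: wedge.zero)
next
  case (add s t)
  then show ?case using additive.add[OF rmul_additive[OF a]] by (simp add: wedge.add distrib_right)
next
  case (tens x y)
  then show ?case using a mult_Om[of y 1 a 0] by (simp add: rmul_tens wedge_tens mult.assoc)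
qed

end

locale central_wedge_calculus = wedge_calculus +
  fixes F :: "'t::ab_group_add set" and Psym :: "'t \<Rightarrow> 't"
  assumes F_rmul: "f \<in> F \<Longrightarrow> a \<in> Om 0 \<Longrightarrow> rmul f a \<in> F"
    and Q_bij: "bij_betw wedgeT F (Om 2)"
    and Psym_add: "Psym (s + t) = Psym s + Psym t"
    and Psym_idem: "Psym (Psym t) = Psym t"
    and Psym_image: "range Psym = {t. wedgeT t = 0}"
    and Psym_kernel: "{t. Psym t = 0} = F"
    and centrally_generated: "is_tensor_product (centre (Om 0) (*) (*) (Om 0))
      (centre (Om 0) (*) (*) (Om 1)) (Om 0) (*) (*) (Om 1) (*)"
    and sigma_tens_central: "\<omega> \<in> centre (Om 0) (*) (*) (Om 1) \<Longrightarrow> \<eta> \<in> centre (Om 0) (*) (*) (Om 1)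
      \<Longrightarrow> sigma Psym (tens \<omega> \<eta>) = tens \<eta> \<omega>"
begin

abbreviation central where
  "central M \<equiv> centre (Om 0) (*) (*) M"

sublocale Psym: additive Psym
  by unfold_locales (rule Psym_add)

lemma sigma_additive: "additive (sigma Psym)"
  by unfold_locales (simp add: sigma_def Psym.add algebra_simps)

lemma wedge_Psym: "wedgeT (Psym t) = 0"
  using Psym_image by blast

lemma Psym_fixes_wedge_kernel:
  assumes "wedgeT t = 0"
  shows "Psym t = t"
proof -
  obtain s where "t = Psym s" using assms Psym_image by blast
  then show ?thesis by (simp add: Psym_idem)
qed

lemma Psym_complement_in_F: "t - Psym t \<in> F"
  using Psym_kernel by (auto simp: Psym.diff Psym_idem)

lemma Psym_complement_eqI:
  assumes "wedgeT s = wedgeT t"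
  shows "s - Psym s = t - Psym t"
proof -
  have "inj_on wedgeT F" using Q_bij by (rule bij_betw_imp_inj_on)
  moreover have "wedgeT (s - Psym s) = wedgeT (t - Psym t)"
    using assms by (simp add: wedge.diff wedge_Psym)
  ultimately show ?thesis using Psym_complement_in_F by (meson inj_onD)
qed

lemma Psym_rmul:
  assumes a: "a \<in> Om 0"
  shows "Psym (rmul t a) = rmul (Psym t) a"
proof -
  have "rmul t a = rmul (Psym t) a + rmul (t - Psym t) a"
    using additive.add[OF rmul_additive[OF a], of "Psym t" "t - Psym t"] by simp
  moreover have "Psym (rmul (Psym t) a) = rmul (Psym t) a"
    using a by (simp add: Psym_fixes_wedge_kernel wedge_rmul wedge_Psym)
  moreover have "Psym (rmul (t - Psym t) a) = 0"
    using F_rmul[OF Psym_complement_in_F a] Psym_kernel by blast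
  ultimately show ?thesis by (metis Psym.add add.right_neutral)
qed

lemma sigma_rmul:
  assumes a: "a \<in> Om 0"
  shows "sigma Psym (rmul t a) = rmul (sigma Psym t) a"
  using additive.add[OF rmul_additive[OF a]] additive.diff[OF rmul_additive[OF a]]
  by (simp add: sigma_def Psym_rmul[OF a])

lemma lmul_tens_central:
  assumes a: "a \<in> Om 0" and "\<omega> \<in> central (Om 1)" and "\<eta> \<in> central (Om 1)"
  shows "lmul a (tens \<omega> \<eta>) = rmul (tens \<omega> \<eta>) a"
proof -
  from assms have \<omega>: "\<omega> \<in> Om 1" "a * \<omega> = \<omega> * a" and \<eta>: "\<eta> \<in> Om 1" "a * \<eta> = \<eta> * a"
    by (auto simp: centre_def)
  have "lmul a (tens \<omega> \<eta>) = tens (\<omega> * a) \<eta>" using lmul_tens a \<omega> \<eta> by simp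
  also have "\<dots> = tens \<omega> (\<eta> * a)" using tens_balanced a \<omega> \<eta> by simp
  also have "\<dots> = rmul (tens \<omega> \<eta>) a" using rmul_tens a \<omega> \<eta> by simp
  finally show ?thesis .
qed

lemma central_tens_induct [case_names zero add central]:
  assumes P_zero: "P 0" and P_add: "\<And>s t. P s \<Longrightarrow> P t \<Longrightarrow> P (s + t)"
    and P_central: "\<And>\<omega> \<eta> c. \<omega> \<in> central (Om 1) \<Longrightarrow> \<eta> \<in> central (Om 1) \<Longrightarrow> c \<in> Om 0
      \<Longrightarrow> P (rmul (tens \<omega> \<eta>) c)"
  shows "P t"
proof -
  have P_central_left: "P (tens \<omega> y)" if \<omega>: "\<omega> \<in> central (Om 1)" and y: "y \<in> Om 1" for \<omega> y
    using centrally_generated Om_subgroup[of 1] y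
  proof (induction y rule: tensor_product_induct)
    case zero
    show ?case using \<omega> P_zero by (simp add: centre_def tens_zero_right)
  next
    case (add y y')
    then show ?case using \<omega> P_add by (simp add: centre_def tens_add_right)
  next
    case (tensor \<eta> c)
    then show ?case using \<omega> P_central by (simp add: centre_def rmul_tens)
  qed
  have "P (tens x y)" if x: "x \<in> Om 1" and y: "y \<in> Om 1" for x y
    using centrally_generated Om_subgroup[of 1] x
  proof (induction x rule: tensor_product_induct)
    case zero
    show ?case using y P_zero by (simp add: tens_zero_left)
  next
    case (add x x')
    then show ?case using y P_add by (simp add: tens_add_left)
  next
    case (tensor \<omega> c)
    then show ?case using y mult_Om[of c 0 y 1] P_central_left
      by (simp add: centre_def tens_balanced)
  qed
  then show ?thesis using tens_induct[of P] P_zero P_add by blast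
qed

lemma sigma_lmul:
  assumes a: "a \<in> Om 0"
  shows "sigma Psym (lmul a t) = lmul a (sigma Psym t)"
proof (induction t rule: central_tens_induct)
  case zero
  show ?case using additive.zero[OF lmul_additive[OF a]] additive.zero[OF sigma_additive] by simp
next
  case (add s t)
  then show ?case using additive.add[OF lmul_additive[OF a]] additive.add[OF sigma_additive] by simp
next
  case (central \<omega> \<eta> c)
  have ac: "a * c \<in> Om 0" using mult_Om[of a 0 c 0] a central by simp
  have "sigma Psym (lmul a (rmul (tens \<omega> \<eta>) c)) = sigma Psym (rmul (tens \<omega> \<eta>) (a * c))"
    using central a by (simp add: lmul_rmul lmul_tens_central rmul_rmul)
  also have "\<dots> = rmul (tens \<eta> \<omega>) (a * c)"
    using ac central by (simp add: sigma_rmul sigma_tens_central)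
  also have "\<dots> = lmul a (rmul (tens \<eta> \<omega>) c)"
    using central a by (simp add: lmul_rmul lmul_tens_central rmul_rmul)
  also have "\<dots> = lmul a (sigma Psym (rmul (tens \<omega> \<eta>) c))"
    using central by (simp add: sigma_rmul sigma_tens_central)
  finally show ?case .
qed

lemma central_forms_anticommute:
  assumes "\<omega> \<in> central (Om 1)" and "\<eta> \<in> central (Om 1)"
  shows "\<omega> * \<eta> + \<eta> * \<omega> = 0"
proof -
  have "\<eta> * \<omega> = wedgeT (sigma Psym (tens \<omega> \<eta>))"
    using assms by (simp add: sigma_tens_central wedge_tens centre_def)
  also have "\<dots> = - (\<omega> * \<eta>)"
    using assms wedge_sigma[OF wedge.additive_axioms wedge_Psym] by (simp add: wedge_tens centre_def)
  finally show ?thesis by (simp add: add_eq_0_iff2)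
qed

lemma central_form_anticommute_one_form:
  assumes \<omega>: "\<omega> \<in> central (Om 1)" and x: "x \<in> Om 1"
  shows "\<omega> * x + x * \<omega> = 0"
  using centrally_generated Om_subgroup[of 1] x
proof (induction x rule: tensor_product_induct)
  case (tensor \<eta> c)
  then have "\<omega> * (\<eta> * c) + \<eta> * c * \<omega> = (\<omega> * \<eta> + \<eta> * \<omega>) * c"
    using \<omega> by (simp add: centre_def algebra_simps)
  then show ?case using central_forms_anticommute[OF \<omega> \<open>\<eta> \<in> central (Om 1)\<close>] by simp
qed (simp_all add: algebra_simps)

lemma d_central_form:
  assumes "\<omega> \<in> central (Om 1)"
  shows "d \<omega> \<in> central (Om 2)"
  using assms diff_calculus_d_closed[OF calculus, of _ 0]
  by (intro diff_calculus_d_central[OF calculus])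
    (auto simp: centre_def intro: central_form_anticommute_one_form)

lemma diff_sigma_central:
  assumes "wedgeT u \<in> central (Om 2)"
  shows "u - sigma Psym u \<in> centre (Om 0) lmul rmul UNIV"
proof -
  have "lmul a (u - sigma Psym u) = rmul (u - sigma Psym u) a" if a: "a \<in> Om 0" for a
  proof -
    have wedge_eq: "wedgeT (lmul a u) = wedgeT (rmul u a)"
      using assms a by (simp add: wedge_lmul wedge_rmul centre_def)
    have "lmul a (u - sigma Psym u) = lmul a u - sigma Psym (lmul a u)"
      by (simp add: additive.diff[OF lmul_additive[OF a]] sigma_lmul[OF a])
    also have "\<dots> = (lmul a u - Psym (lmul a u)) + (lmul a u - Psym (lmul a u))"
      by (simp add: sigma_def)
    also have "\<dots> = (rmul u a - Psym (rmul u a)) + (rmul u a - Psym (rmul u a))"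
      using Psym_complement_eqI[OF wedge_eq] by simp
    also have "\<dots> = rmul u a - sigma Psym (rmul u a)"
      by (simp add: sigma_def)
    also have "\<dots> = rmul (u - sigma Psym u) a"
      by (simp add: additive.diff[OF rmul_additive[OF a]] sigma_rmul[OF a])
    finally show ?thesis .
  qed
  then show ?thesis by (simp add: centre_def)
qed

lemma wedge_nabla0:
  assumes "\<omega> \<in> Om 1"
  shows "wedgeT (nabla0 (Om 0) d tens wedgeT F n p iota \<omega>) = - d \<omega>"
proof -
  define g where "g = grassmann (Om 0) d tens n p iota \<omega>"
  have "wedgeT g + d \<omega> \<in> Om 2"
    using add_Om wedge_in_Om2 diff_calculus_d_closed[OF calculus assms] by (simp add: numeral_2_eq_2)
  then have "wedgeT (the_inv_into F wedgeT (wedgeT g + d \<omega>)) = wedgeT g + d \<omega>"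
    by (rule f_the_inv_into_f_bij_betw[OF Q_bij])
  then show ?thesis by (simp add: nabla0_def g_def wedge.diff)
qed

end

theorem lemma6p4:
  fixes Om :: "nat \<Rightarrow> 'w::ring_1 set" and d :: "'w \<Rightarrow> 'w" and sc :: "complex \<Rightarrow> 'w"
    and lmul :: "'w \<Rightarrow> 't::ab_group_add \<Rightarrow> 't" and rmul :: "'t \<Rightarrow> 'w \<Rightarrow> 't"
    and tens :: "'w \<Rightarrow> 'w \<Rightarrow> 't" and wedgeT :: "'t \<Rightarrow> 'w"
    and F :: "'t set" and Psym :: "'t \<Rightarrow> 't"
    and n :: nat and p :: "nat \<Rightarrow> nat \<Rightarrow> 'w" and iota :: "(nat \<Rightarrow> 'w) \<Rightarrow> 'w"
  assumes dc: "diff_calculus Om d sc"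
    \<comment> \<open>E (x)_A E as a bimodule, with canonical map tens\<close>
    and bimod: "tensor_bimodule (Om 0) (Om 1) lmul rmul tens"
    and tensor: "is_tensor_product (Om 0) (Om 1) (Om 1) (*) (*) UNIV tens"
    \<comment> \<open>E finitely generated projective: idempotent p in M_n(A), p(A^n) = E\<close>
    and p_entries: "\<forall>i<n. \<forall>j<n. p i j \<in> Om 0"
    and p_idem: "\<forall>i<n. \<forall>j<n. (\<Sum>k<n. p i k * p k j) = p i j"
    and iota_bij: "bij_betw iota (proj_image (Om 0) n p) (Om 1)"
    and iota_add: "\<forall>v\<in>proj_image (Om 0) n p. \<forall>w\<in>proj_image (Om 0) n p. iota (\<lambda>i. v i + w i) = iota v + iota w"
    and iota_rlin: "\<forall>v\<in>proj_image (Om 0) n p. \<forall>a\<in>Om 0. iota (\<lambda>i. v i * a) = iota v * a"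
    \<comment> \<open>(1): E = Z(E) (x)_{Z(A)} A via the multiplication map\<close>
    and cond1: "is_tensor_product (centre (Om 0) (*) (*) (Om 0)) (centre (Om 0) (*) (*) (Om 1)) (Om 0)
                  (*) (*) (Om 1) (*)"
    \<comment> \<open>the induced product wedge : E (x)_A E -> Omega^2\<close>
    and wedge_add: "\<forall>s t. wedgeT (s + t) = wedgeT s + wedgeT t"
    and wedge_tens: "\<forall>x\<in>Om 1. \<forall>y\<in>Om 1. wedgeT (tens x y) = x * y"
    \<comment> \<open>(2)\<close>
    and F_sub: "subgroup_set F"
    and F_right: "\<forall>f\<in>F. \<forall>a\<in>Om 0. rmul f a \<in> F"
    and dsum: "(\<forall>t. \<exists>k f. wedgeT k = 0 \<and> f \<in> F \<and> t = k + f) \<and> {t. wedgeT t = 0} \<inter> F = {0}"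
    and Q_bij: "bij_betw wedgeT F (Om 2)"
    and Q_rlin: "\<forall>f\<in>F. \<forall>a\<in>Om 0. wedgeT (rmul f a) = wedgeT f * a"
    \<comment> \<open>P_sym: the idempotent with image ker(wedge) and kernel F\<close>
    and Psym_add: "\<forall>s t. Psym (s + t) = Psym s + Psym t"
    and Psym_idem: "\<forall>t. Psym (Psym t) = Psym t"
    and Psym_image: "range Psym = {t. wedgeT t = 0}"
    and Psym_kernel: "{t. Psym t = 0} = F"
    \<comment> \<open>(3)\<close>
    and cond3: "\<forall>\<omega>\<in>centre (Om 0) (*) (*) (Om 1). \<forall>\<eta>\<in>centre (Om 0) (*) (*) (Om 1).
                  sigma Psym (tens \<omega> \<eta>) = tens \<eta> \<omega>"
  shows "\<forall>\<omega>\<in>centre (Om 0) (*) (*) (Om 1).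
           d \<omega> \<in> centre (Om 0) (*) (*) (Om 2) \<and>
           nabla0 (Om 0) d tens wedgeT F n p iota \<omega>
             - sigma Psym (nabla0 (Om 0) d tens wedgeT F n p iota \<omega>)
             \<in> centre (Om 0) lmul rmul UNIV"
proof
  interpret central_wedge_calculus Om d sc lmul rmul tens wedgeT F Psym
    using dc bimod tensor wedge_add wedge_tens F_right Q_bij Psym_add Psym_idem Psym_image
      Psym_kernel cond1 cond3
    by unfold_locales blast+
  fix \<omega> assume \<omega>: "\<omega> \<in> central (Om 1)"
  then have d\<omega>: "d \<omega> \<in> central (Om 2)" by (rule d_central_form)
  then have "wedgeT (nabla0 (Om 0) d tens wedgeT F n p iota \<omega>) \<in> central (Om 2)"
    using \<omega> by (simp add: wedge_nabla0 centre_def uminus_Om)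
  then show "d \<omega> \<in> central (Om 2) \<and>
      nabla0 (Om 0) d tens wedgeT F n p iota \<omega> - sigma Psym (nabla0 (Om 0) d tens wedgeT F n p iota \<omega>)
        \<in> centre (Om 0) lmul rmul UNIV"
    using d\<omega> diff_sigma_central by blast
qed

end
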